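(* Let $(\Omega,\mathcal{A},\mu)$ be a diffuse $\sigma$-finite measure space, let $p\in[1,\infty)$, let $u\in L_\infty(\mu)$, and let $M_u$ be the multiplication operator $M_uf:=uf$ on $L_p(\mu)$. Then \[ \|M_u+K\|\ge\|M_u\|=\|u\|_\infty\qquad\text{for all compact operators } K \text{ on } L_p(\mu), \] and consequently $\|M_u\|_{e}=\|u\|_\infty$, where $\|M_u\|_{e}:=\inf\{\|M_u+K\| : K \text{ a compact operator on } L_p(\mu)\}$.
   Context: $\mu$ is diffuse if every measurable $A$ with $\mu(A)>0$ contains a measurable $A'$ with $0<\mu(A')<\mu(A)$. *)

theory Defs
  imports "HOL-Analysis.Analysis" "HOL-Probability.Essential_Supremum"
begin

definition diffuse :: "'a measure \<Rightarrow> bool" where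
  "diffuse M \<longleftrightarrow> (\<forall>A\<in>sets M. emeasure M A > 0 \<longrightarrow>
      (\<exists>A'\<in>sets M. A' \<subseteq> A \<and> 0 < emeasure M A' \<and> emeasure M A' < emeasure M A))"

text \<open>Representatives of elements of L_p(mu); scalars are a normed field (real or complex).\<close>
definition Lp :: "'a measure \<Rightarrow> real \<Rightarrow> ('a \<Rightarrow> 'b::{real_normed_field,second_countable_topology}) set" where
  "Lp M p = {f. f \<in> borel_measurable M \<and> integrable M (\<lambda>x. norm (f x) powr p)}"

definition Lp_norm :: "'a measure \<Rightarrow> real \<Rightarrow> ('a \<Rightarrow> 'b::{real_normed_field,second_countable_topology}) \<Rightarrow> real" where
  "Lp_norm M p f = (\<integral>x. norm (f x) powr p \<partial>M) powr (1/p)"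

definition Linf_norm :: "'a measure \<Rightarrow> ('a \<Rightarrow> 'b::{real_normed_field,second_countable_topology}) \<Rightarrow> real" where
  "Linf_norm M u = real_of_ereal (esssup M (\<lambda>x. ereal (norm (u x))))"

definition Linf :: "'a measure \<Rightarrow> ('a \<Rightarrow> 'b::{real_normed_field,second_countable_topology}) set" where
  "Linf M = {u. u \<in> borel_measurable M \<and> esssup M (\<lambda>x. ereal (norm (u x))) < \<infinity>}"

text \<open>A bounded linear operator on L_p(mu), acting on representatives and
  compatible with a.e. equality (i.e. a well-defined operator on equivalence classes).\<close>
definition Lp_operator :: "'a measure \<Rightarrow> real \<Rightarrow>
    (('a \<Rightarrow> 'b::{real_normed_field,second_countable_topology}) \<Rightarrow> ('a \<Rightarrow> 'b)) \<Rightarrow> bool" where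
  "Lp_operator M p T \<longleftrightarrow>
     (\<forall>f\<in>Lp M p. T f \<in> Lp M p) \<and>
     (\<forall>f\<in>Lp M p. \<forall>g\<in>Lp M p. (AE x in M. f x = g x) \<longrightarrow> (AE x in M. T f x = T g x)) \<and>
     (\<forall>f\<in>Lp M p. \<forall>g\<in>Lp M p. \<forall>c.
        AE x in M. T (\<lambda>y. c * f y + g y) x = c * T f x + T g x) \<and>
     (\<exists>C. \<forall>f\<in>Lp M p. Lp_norm M p (T f) \<le> C * Lp_norm M p f)"

definition op_norm :: "'a measure \<Rightarrow> real \<Rightarrow>
    (('a \<Rightarrow> 'b::{real_normed_field,second_countable_topology}) \<Rightarrow> ('a \<Rightarrow> 'b)) \<Rightarrow> real" where
  "op_norm M p T = Sup ((\<lambda>f. Lp_norm M p (T f)) ` {f\<in>Lp M p. Lp_norm M p f \<le> 1})"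

definition compact_Lp_op :: "'a measure \<Rightarrow> real \<Rightarrow>
    (('a \<Rightarrow> 'b::{real_normed_field,second_countable_topology}) \<Rightarrow> ('a \<Rightarrow> 'b)) \<Rightarrow> bool" where
  "compact_Lp_op M p K \<longleftrightarrow> Lp_operator M p K \<and>
     (\<forall>f :: nat \<Rightarrow> ('a \<Rightarrow> 'b). (\<forall>n. f n \<in> Lp M p) \<longrightarrow> (\<exists>B. \<forall>n. Lp_norm M p (f n) \<le> B) \<longrightarrow>
        (\<exists>r g. strict_mono r \<and> g \<in> Lp M p \<and>
           (\<lambda>n. Lp_norm M p (\<lambda>x. K (f (r n)) x - g x)) \<longlonglongrightarrow> 0))"

definition mult_op :: "('a \<Rightarrow> 'b::real_normed_field) \<Rightarrow> ('a \<Rightarrow> 'b) \<Rightarrow> ('a \<Rightarrow> 'b)" where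
  "mult_op u f = (\<lambda>x. u x * f x)"

definition ess_norm_mult :: "'a measure \<Rightarrow> real \<Rightarrow> ('a \<Rightarrow> 'b::{real_normed_field,second_countable_topology}) \<Rightarrow> real" where
  "ess_norm_mult M p u =
     Inf ((\<lambda>K. op_norm M p (\<lambda>f x. mult_op u f x + K f x)) ` {K. compact_Lp_op M p K})"

end

theory Submission
  imports Defs
begin

(* Fix c < ess sup |u|. By sigma-finiteness the set where |u| > c contains a set of positive
  finite measure, and by diffuseness that set contains infinitely many pairwise disjoint sets
  P_n of positive finite measure. Their normalised indicators f_n form a bounded sequence, so
  for compact K some K f_(r n) converges; the differences h_n = f_(r n) - f_(r (n+1)) are
  then unit vectors with K h_n -> 0 and ||u h_n|| >= c, whence ||M_u + K|| >= c. The bound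
  ||M_u|| <= ess sup |u| is pointwise, and K = 0 gives the rest. *)

lemma powr_le_two_powr_sum:
  fixes a b x p :: real
  assumes "0 \<le> a" "0 \<le> b" "0 \<le> x" "x \<le> a + b" "0 < p"
  shows "x powr p \<le> 2 powr p * (a powr p + b powr p)"
proof -
  have "x powr p \<le> (2 * max a b) powr p"
    using assms by (intro powr_mono2) auto
  also have "\<dots> = 2 powr p * max a b powr p"
    using assms by (simp add: powr_mult)
  also have "max a b powr p \<le> a powr p + b powr p"
    by (cases "a \<le> b") (auto simp: max_def)
  finally show ?thesis
    by simp
qed

lemma powr_le_weighted_sum:
  fixes a b c p d :: real
  assumes "0 \<le> a" "0 \<le> b" "0 \<le> c" "a \<le> b + c" "0 < p" "0 < d" "d < 1"
  shows "a powr p \<le> (1 - d) powr (-p) * b powr p + d powr (-p) * c powr p"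
proof (cases "c \<le> d * a")
  case True
  then have "(1 - d) * a \<le> b"
    using assms by (simp add: algebra_simps)
  then have "(1 - d) powr p * a powr p \<le> b powr p"
    using assms by (metis powr_mono2 powr_mult less_imp_le diff_ge_0_iff_ge mult_nonneg_nonneg)
  then have "a powr p \<le> (1 - d) powr (-p) * b powr p"
    using assms by (simp add: powr_minus field_simps)
  then show ?thesis
    by (simp add: add_increasing2)
next
  case False
  then have "a \<le> c / d"
    using assms by (simp add: field_simps)
  then have "a powr p \<le> d powr (-p) * c powr p"
    using assms powr_mono2[of p a "c / d"] by (simp add: powr_divide powr_minus field_simps)
  then show ?thesis
    by (simp add: add_increasing)
qed

lemma Linf_norm_nonneg:
  assumes "u \<in> Linf M"
  shows "0 \<le> Linf_norm M u"
proof -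
  have "u \<in> borel_measurable M"
    using assms by (simp add: Linf_def)
  then have meas: "(\<lambda>x. ereal (norm (u x))) \<in> borel_measurable M"
    by measurable
  show ?thesis
  proof (cases "emeasure M (space M) = 0")
    case True
    then show ?thesis
      using esssup_zero_space[OF True meas] by (simp add: Linf_norm_def)
  next
    case False
    have "esssup M (\<lambda>x. 0) \<le> esssup M (\<lambda>x. ereal (norm (u x)))"
      by (rule esssup_mono) (use meas in auto)
    then have "0 \<le> esssup M (\<lambda>x. ereal (norm (u x)))"
      by (metis esssup_const[OF False])
    then show ?thesis
      by (simp add: Linf_norm_def real_of_ereal_pos)
  qed
qed

lemma AE_norm_le_Linf_norm:
  assumes "u \<in> Linf M"
  shows "AE x in M. norm (u x) \<le> Linf_norm M u"
  using esssup_AE[of "\<lambda>x. ereal (norm (u x))" M]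
proof (rule eventually_mono)
  fix x
  assume "ereal (norm (u x)) \<le> esssup M (\<lambda>x. ereal (norm (u x)))"
  with assms show "norm (u x) \<le> Linf_norm M u"
    unfolding Linf_norm_def Linf_def
    by (cases "esssup M (\<lambda>x. ereal (norm (u x)))") auto
qed

lemma emeasure_norm_gt_pos:
  assumes "u \<in> Linf M" "0 \<le> c" "c < Linf_norm M u"
  shows "0 < emeasure M {x\<in>space M. c < norm (u x)}"
proof (rule ccontr)
  have meas: "u \<in> borel_measurable M"
    using assms by (simp add: Linf_def)
  assume "\<not> ?thesis"
  then have "AE x in M. ereal (norm (u x)) \<le> ereal c"
    using meas by (intro AE_I'[of "{x\<in>space M. c < norm (u x)}"]) (auto simp: not_gr_zero)
  then have "esssup M (\<lambda>x. ereal (norm (u x))) \<le> ereal c"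
    by (intro esssup_I) (use meas in auto)
  then have "Linf_norm M u \<le> c"
    unfolding Linf_norm_def using assms(2)
    by (cases "esssup M (\<lambda>x. ereal (norm (u x)))") auto
  with assms(3) show False
    by simp
qed

section \<open>Disjoint sets of positive finite measure\<close>

lemma (in sigma_finite_measure) obtain_finite_positive_subset:
  assumes "E \<in> sets M" "0 < emeasure M E"
  obtains B where "B \<in> sets M" "B \<subseteq> E" "0 < emeasure M B" "emeasure M B < \<infinity>"
proof (cases "emeasure M E = \<infinity>")
  case True
  then show ?thesis
    using approx_PInf_emeasure_with_finite[OF assms(1) True, of 0] that by auto
next
  case False
  then show ?thesis
    using that assms by (auto simp: less_top)
qed

lemma diffuse_split:
  assumes "diffuse M" "S \<in> sets M" "0 < emeasure M S" "emeasure M S < \<infinity>"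
  shows "\<exists>Q\<in>sets M. Q \<subseteq> S \<and> 0 < emeasure M Q \<and> 0 < emeasure M (S - Q)"
proof -
  obtain Q where Q: "Q \<in> sets M" "Q \<subseteq> S" "0 < emeasure M Q" "emeasure M Q < emeasure M S"
    using assms unfolding diffuse_def by blast
  have "emeasure M (S - Q) = emeasure M S - emeasure M Q"
    using Q assms by (intro emeasure_Diff) auto
  also have "\<dots> > 0"
    using Q(4) by (rule diff_gr0_ennreal)
  finally show ?thesis
    using Q by blast
qed

lemma diffuse_obtain_disjoint_family:
  assumes "diffuse M" "B \<in> sets M" "0 < emeasure M B" "emeasure M B < \<infinity>"
  obtains P :: "nat \<Rightarrow> 'a set" where "\<And>n. P n \<in> sets M" "\<And>n. P n \<subseteq> B"
    "\<And>n. 0 < emeasure M (P n)" "\<And>n. emeasure M (P n) < \<infinity>" "disjoint_family P"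
proof -
  define good where "good S \<longleftrightarrow> S \<in> sets M \<and> 0 < emeasure M S \<and> emeasure M S < \<infinity>" for S
  define part where
    "part S = (SOME Q. Q \<in> sets M \<and> Q \<subseteq> S \<and> 0 < emeasure M Q \<and> 0 < emeasure M (S - Q))" for S
  have part: "part S \<in> sets M" "part S \<subseteq> S" "0 < emeasure M (part S)" "good (S - part S)"
    if "good S" for S
  proof -
    have "part S \<in> sets M \<and> part S \<subseteq> S \<and> 0 < emeasure M (part S) \<and> 0 < emeasure M (S - part S)"
      unfolding part_def by (rule someI_ex) (use diffuse_split[OF assms(1)] that in \<open>auto simp: good_def\<close>)
    moreover have "emeasure M (S - part S) \<le> emeasure M S"
      using that by (intro emeasure_mono) (auto simp: good_def)
    ultimately show "part S \<in> sets M" "part S \<subseteq> S" "0 < emeasure M (part S)"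
      "good (S - part S)"
      using that by (auto simp: good_def)
  qed
  define R where "R = rec_nat B (\<lambda>_ S. S - part S)"
  have R_0: "R 0 = B" and R_Suc: "\<And>n. R (Suc n) = R n - part (R n)"
    by (simp_all add: R_def)
  have good_R: "good (R n)" for n
    by (induction n) (use assms part in \<open>auto simp: R_0 R_Suc good_def\<close>)
  have R_antimono: "R m \<subseteq> R n" if "n \<le> m" for n m
    using that by (induction m rule: dec_induct) (auto simp: R_Suc)
  show ?thesis
  proof
    fix n
    show "part (R n) \<in> sets M" "0 < emeasure M (part (R n))"
      using part[OF good_R] by auto
    show "part (R n) \<subseteq> B"
      using part(2)[OF good_R] R_antimono[of 0 n] by (auto simp: R_0)
    show "emeasure M (part (R n)) < \<infinity>"
      using part[OF good_R] good_R[of n] emeasure_mono[of "part (R n)" "R n" M]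
      by (auto simp: good_def)
  next
    have "part (R m) \<inter> part (R n) = {}" if "m < n" for m n
    proof -
      have "part (R n) \<subseteq> R (Suc m)"
        using part(2)[OF good_R] R_antimono[of "Suc m" n] that by auto
      then show ?thesis
        by (auto simp: R_Suc)
    qed
    then show "disjoint_family (\<lambda>n. part (R n))"
      unfolding disjoint_family_on_def by (metis Int_commute linorder_neqE_nat)
  qed
qed

section \<open>\<open>p\<close>-th powers of \<open>L\<^sub>p\<close> norms\<close>

definition Lp_norm_powr ::
    "'a measure \<Rightarrow> real \<Rightarrow> ('a \<Rightarrow> 'b::{real_normed_field,second_countable_topology}) \<Rightarrow> real"
  where
  "Lp_norm_powr M p f = (\<integral>x. norm (f x) powr p \<partial>M)"

lemma Lp_norm_powr_nonneg: "0 \<le> Lp_norm_powr M p f"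
  unfolding Lp_norm_powr_def by (intro integral_nonneg_AE) auto

lemma Lp_norm_nonneg: "0 \<le> Lp_norm M p f"
  by (simp add: Lp_norm_def)

lemma Lp_norm_powr_eq: "0 < p \<Longrightarrow> Lp_norm_powr M p f = Lp_norm M p f powr p"
  using Lp_norm_powr_nonneg[of M p f] by (simp add: Lp_norm_def Lp_norm_powr_def powr_powr)

lemma Lp_norm_le_iff:
  assumes "0 < p" "0 \<le> a"
  shows "Lp_norm M p f \<le> a \<longleftrightarrow> Lp_norm_powr M p f \<le> a powr p"
proof
  assume "Lp_norm M p f \<le> a"
  then show "Lp_norm_powr M p f \<le> a powr p"
    using assms by (simp add: Lp_norm_powr_eq Lp_norm_nonneg powr_mono2)
next
  assume "Lp_norm_powr M p f \<le> a powr p"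
  then have "Lp_norm_powr M p f powr (1 / p) \<le> (a powr p) powr (1 / p)"
    using assms by (intro powr_mono2) (auto simp: Lp_norm_powr_nonneg)
  then show "Lp_norm M p f \<le> a"
    using assms by (simp add: Lp_norm_def Lp_norm_powr_def powr_powr)
qed

lemma zero_in_Lp: "(\<lambda>x. 0) \<in> Lp M p"
  by (simp add: Lp_def)

lemma Lp_norm_zero: "Lp_norm M p (\<lambda>x. 0) = 0"
  by (simp add: Lp_norm_def)

lemma Lp_dominated:
  assumes "h \<in> borel_measurable M" "integrable M g" "AE x in M. norm (h x) powr p \<le> g x"
  shows "h \<in> Lp M p" "Lp_norm_powr M p h \<le> (\<integral>x. g x \<partial>M)"
proof -
  have "AE x in M. norm (norm (h x) powr p) \<le> norm (g x)"
    using assms(3) by (rule eventually_mono) auto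
  then have "integrable M (\<lambda>x. norm (h x) powr p)"
    using assms(1) by (intro Bochner_Integration.integrable_bound[OF assms(2)]) auto
  then show "h \<in> Lp M p"
    using assms(1) by (simp add: Lp_def)
  show "Lp_norm_powr M p h \<le> (\<integral>x. g x \<partial>M)"
    unfolding Lp_norm_powr_def using assms(2,3)
    by (intro integral_mono_AE') (auto elim!: eventually_mono intro: order_trans[rotated])
qed

lemma Lp_dominated_by_sum:
  assumes "f \<in> Lp M p" "g \<in> Lp M p" "h \<in> borel_measurable M" "0 < p"
    "AE x in M. norm (h x) \<le> norm (f x) + norm (g x)"
  shows "h \<in> Lp M p" "Lp_norm_powr M p h \<le> 2 powr p * (Lp_norm_powr M p f + Lp_norm_powr M p g)"
proof -
  have int: "integrable M (\<lambda>x. 2 powr p * (norm (f x) powr p + norm (g x) powr p))"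
    using assms by (simp add: Lp_def)
  have "AE x in M. norm (h x) powr p \<le> 2 powr p * (norm (f x) powr p + norm (g x) powr p)"
    using assms(5) by (rule eventually_mono) (simp add: powr_le_two_powr_sum assms(4))
  from Lp_dominated[OF assms(3) int this]
  show "h \<in> Lp M p" "Lp_norm_powr M p h \<le> 2 powr p * (Lp_norm_powr M p f + Lp_norm_powr M p g)"
    using assms(1,2) by (simp_all add: Lp_def Lp_norm_powr_def)
qed

lemma Lp_add:
  assumes "f \<in> Lp M p" "g \<in> Lp M p" "0 < p"
  shows "(\<lambda>x. f x + g x) \<in> Lp M p"
  by (rule Lp_dominated_by_sum(1)[OF assms(1,2) _ assms(3)])
    (use assms in \<open>auto simp: Lp_def norm_triangle_ineq\<close>)

lemma Lp_diff:
  assumes "f \<in> Lp M p" "g \<in> Lp M p" "0 < p"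
  shows "(\<lambda>x. f x - g x) \<in> Lp M p"
  by (rule Lp_dominated_by_sum(1)[OF assms(1,2) _ assms(3)])
    (use assms in \<open>auto simp: Lp_def norm_triangle_ineq4\<close>)

lemma Lp_norm_powr_le_weighted:
  assumes "(\<lambda>x. f x + g x) \<in> Lp M p" "g \<in> Lp M p" "0 < p" "0 < d" "d < 1"
  shows "Lp_norm_powr M p f \<le>
    (1 - d) powr (-p) * Lp_norm_powr M p (\<lambda>x. f x + g x) + d powr (-p) * Lp_norm_powr M p g"
proof -
  have "Lp_norm_powr M p f \<le>
    (\<integral>x. (1 - d) powr (-p) * norm (f x + g x) powr p + d powr (-p) * norm (g x) powr p \<partial>M)"
    unfolding Lp_norm_powr_def
  proof (rule integral_mono')
    fix x
    have "norm (f x) \<le> norm (f x + g x) + norm (g x)"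
      by (metis add_diff_cancel norm_triangle_ineq4)
    then show "norm (f x) powr p \<le>
      (1 - d) powr (-p) * norm (f x + g x) powr p + d powr (-p) * norm (g x) powr p"
      using assms by (intro powr_le_weighted_sum) auto
  qed (use assms in \<open>auto simp: Lp_def\<close>)
  also have "\<dots> = (1 - d) powr (-p) * Lp_norm_powr M p (\<lambda>x. f x + g x) + d powr (-p) * Lp_norm_powr M p g"
    using assms unfolding Lp_norm_powr_def by (simp add: Lp_def)
  finally show ?thesis .
qed

lemma Lp_norm_powr_diff_disjoint:
  assumes "f \<in> Lp M p" "g \<in> Lp M p" "\<And>x. f x = 0 \<or> g x = 0"
  shows "(\<lambda>x. f x - g x) \<in> Lp M p"
    "Lp_norm_powr M p (\<lambda>x. f x - g x) = Lp_norm_powr M p f + Lp_norm_powr M p g"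
proof -
  have pow: "norm (f x - g x) powr p = norm (f x) powr p + norm (g x) powr p" for x
    using assms(3)[of x] by auto
  show "(\<lambda>x. f x - g x) \<in> Lp M p"
    using assms(1,2) by (auto simp: Lp_def pow)
  show "Lp_norm_powr M p (\<lambda>x. f x - g x) = Lp_norm_powr M p f + Lp_norm_powr M p g"
    using assms(1,2) by (simp add: Lp_def Lp_norm_powr_def pow)
qed

lemma mult_op_in_Lp:
  assumes "u \<in> Linf M" "f \<in> Lp M p" "0 < p"
  shows "mult_op u f \<in> Lp M p"
    and "Lp_norm_powr M p (mult_op u f) \<le> Linf_norm M u powr p * Lp_norm_powr M p f"
proof -
  have meas: "mult_op u f \<in> borel_measurable M"
    using assms unfolding mult_op_def Linf_def Lp_def by auto
  have "AE x in M. norm (mult_op u f x) powr p \<le> Linf_norm M u powr p * norm (f x) powr p"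
    using AE_norm_le_Linf_norm[OF assms(1)]
  proof (rule eventually_mono)
    fix x
    assume "norm (u x) \<le> Linf_norm M u"
    then have "(norm (u x) * norm (f x)) powr p \<le> (Linf_norm M u * norm (f x)) powr p"
      using assms(3) by (intro powr_mono2 mult_right_mono) auto
    then show "norm (mult_op u f x) powr p \<le> Linf_norm M u powr p * norm (f x) powr p"
      using Linf_norm_nonneg[OF assms(1)] by (simp add: mult_op_def norm_mult powr_mult)
  qed
  from Lp_dominated[OF meas _ this] assms(2)
  show "mult_op u f \<in> Lp M p"
    and "Lp_norm_powr M p (mult_op u f) \<le> Linf_norm M u powr p * Lp_norm_powr M p f"
    by (simp_all add: Lp_def Lp_norm_powr_def)
qed

lemma Lp_norm_powr_mult_op_ge:
  assumes "h \<in> Lp M p" "mult_op u h \<in> Lp M p" "0 \<le> c" "0 < p"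
    and "\<And>x. x \<in> space M \<Longrightarrow> h x \<noteq> 0 \<Longrightarrow> c \<le> norm (u x)"
  shows "c powr p * Lp_norm_powr M p h \<le> Lp_norm_powr M p (mult_op u h)"
proof -
  have "c powr p * Lp_norm_powr M p h = (\<integral>x. c powr p * norm (h x) powr p \<partial>M)"
    by (simp add: Lp_norm_powr_def)
  also have "\<dots> \<le> Lp_norm_powr M p (mult_op u h)"
    unfolding Lp_norm_powr_def
  proof (rule integral_mono)
    fix x
    assume "x \<in> space M"
    then show "c powr p * norm (h x) powr p \<le> norm (mult_op u h x) powr p"
      using assms(3,4) assms(5)[of x] by (cases "h x = 0")
        (auto simp: mult_op_def norm_mult powr_mult intro: mult_right_mono powr_mono2)
  qed (use assms(1,2) in \<open>auto simp: Lp_def\<close>)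
  finally show ?thesis .
qed

(* Normalised to Lp_norm_powr 1/2, so that the difference of two bumps on disjoint sets
  is a unit vector. *)
definition Lp_bump ::
    "'a measure \<Rightarrow> real \<Rightarrow> 'a set \<Rightarrow> 'a \<Rightarrow> 'b::{real_normed_field,second_countable_topology}"
  where
  "Lp_bump M p A x = (if x \<in> A then of_real ((1 / (2 * measure M A)) powr (1 / p)) else 0)"

lemma norm_Lp_bump_powr:
  assumes "0 < p"
  shows "norm (Lp_bump M p A x :: 'b::{real_normed_field,second_countable_topology}) powr p
    = indicator A x / (2 * measure M A)"
  using assms by (simp add: Lp_bump_def powr_powr)

lemma Lp_bump_in_Lp:
  assumes "A \<in> sets M" "emeasure M A < \<infinity>" "0 < p"
  shows "Lp_bump M p A \<in> Lp M p"
proof -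
  have "Lp_bump M p A \<in> borel_measurable M"
    unfolding Lp_bump_def[abs_def] using assms(1) by (intro measurable_If_set) auto
  moreover have "integrable M (\<lambda>x. indicator A x / (2 * measure M A))"
    using assms by (intro integrable_divide_zero) auto
  ultimately show ?thesis
    using assms(3) by (simp add: Lp_def norm_Lp_bump_powr)
qed

lemma Lp_norm_powr_Lp_bump:
  assumes "A \<in> sets M" "0 < emeasure M A" "emeasure M A < \<infinity>" "0 < p"
  shows "Lp_norm_powr M p (Lp_bump M p A :: 'a \<Rightarrow> 'b::{real_normed_field,second_countable_topology})
    = 1 / 2"
proof -
  have "0 < measure M A"
    using assms by (simp add: measure_def enn2real_positive_iff)
  then show ?thesis
    using assms by (simp add: Lp_norm_powr_def norm_Lp_bump_powr measure_def)
qed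

lemma Lp_operator_bounded_on_ball:
  assumes "Lp_operator M p K"
  obtains C where "0 \<le> C" "\<And>f. f \<in> Lp M p \<Longrightarrow> Lp_norm M p f \<le> 1 \<Longrightarrow> Lp_norm M p (K f) \<le> C"
proof -
  obtain C where C: "\<And>f. f \<in> Lp M p \<Longrightarrow> Lp_norm M p (K f) \<le> C * Lp_norm M p f"
    using assms unfolding Lp_operator_def by blast
  have "Lp_norm M p (K f) \<le> \<bar>C\<bar>" if "f \<in> Lp M p" "Lp_norm M p f \<le> 1" for f
  proof -
    have "C * Lp_norm M p f \<le> \<bar>C\<bar> * 1"
      using that(2) Lp_norm_nonneg[of M p f] by (intro mult_mono) auto
    then show ?thesis
      using C[OF that(1)] by simp
  qed
  then show ?thesis
    using that[of "\<bar>C\<bar>"] by simp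
qed

lemma bdd_above_mult_op_plus:
  fixes u :: "'a \<Rightarrow> 'b::{real_normed_field,second_countable_topology}"
  assumes "u \<in> Linf M" "Lp_operator M p K" "0 < p"
  shows "bdd_above ((\<lambda>f. Lp_norm M p (\<lambda>x. mult_op u f x + K f x)) ` {f\<in>Lp M p. Lp_norm M p f \<le> 1})"
proof -
  obtain C where C: "0 \<le> C" "\<And>f. f \<in> Lp M p \<Longrightarrow> Lp_norm M p f \<le> 1 \<Longrightarrow> Lp_norm M p (K f) \<le> C"
    using Lp_operator_bounded_on_ball[OF assms(2)] by blast
  define L where "L = Linf_norm M u"
  define B where "B = (2 powr p * (L powr p + C powr p)) powr (1 / p)"
  have B: "0 \<le> B" "B powr p = 2 powr p * (L powr p + C powr p)"
    using assms(3) by (simp_all add: B_def powr_powr)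
  show ?thesis
  proof (rule bdd_aboveI2)
    fix f :: "'a \<Rightarrow> 'b"
    assume "f \<in> {f\<in>Lp M p. Lp_norm M p f \<le> 1}"
    then have f: "f \<in> Lp M p" "Lp_norm_powr M p f \<le> 1" "Lp_norm M p f \<le> 1"
      using Lp_norm_le_iff[OF assms(3), of 1] by auto
    have Kf: "K f \<in> Lp M p" "Lp_norm_powr M p (K f) \<le> C powr p"
      using assms(2) f C Lp_norm_le_iff[OF assms(3) C(1)] by (auto simp: Lp_operator_def)
    have "L powr p * Lp_norm_powr M p f \<le> L powr p"
      using f(2) by (simp add: mult_left_le)
    then have uf: "mult_op u f \<in> Lp M p" "Lp_norm_powr M p (mult_op u f) \<le> L powr p"
      using mult_op_in_Lp[OF assms(1) f(1) assms(3)] unfolding L_def by auto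
    have "Lp_norm_powr M p (\<lambda>x. mult_op u f x + K f x)
        \<le> 2 powr p * (Lp_norm_powr M p (mult_op u f) + Lp_norm_powr M p (K f))"
      by (rule Lp_dominated_by_sum(2)[OF uf(1) Kf(1) _ assms(3)])
        (use uf(1) Kf(1) in \<open>auto simp: Lp_def norm_triangle_ineq\<close>)
    also have "\<dots> \<le> B powr p"
      using uf(2) Kf(2) B(2) by simp
    finally show "Lp_norm M p (\<lambda>x. mult_op u f x + K f x) \<le> B"
      using Lp_norm_le_iff[OF assms(3) B(1)] by blast
  qed
qed

lemma Lp_norm_le_op_norm:
  assumes "bdd_above ((\<lambda>f. Lp_norm M p (T f)) ` {f\<in>Lp M p. Lp_norm M p f \<le> 1})"
    and "f \<in> Lp M p" "Lp_norm M p f \<le> 1"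
  shows "Lp_norm M p (T f) \<le> op_norm M p T"
  unfolding op_norm_def using assms by (intro cSup_upper) auto

lemma op_norm_nonneg:
  assumes "bdd_above ((\<lambda>f. Lp_norm M p (T f)) ` {f\<in>Lp M p. Lp_norm M p f \<le> 1})"
  shows "0 \<le> op_norm M p T"
  using Lp_norm_le_op_norm[OF assms zero_in_Lp] Lp_norm_nonneg[of M p "T (\<lambda>x. 0)"]
  by (simp add: Lp_norm_zero)

lemma compact_Lp_op_diff_tendsto_zero:
  fixes f :: "nat \<Rightarrow> 'a \<Rightarrow> 'b::{real_normed_field,second_countable_topology}"
  assumes "compact_Lp_op M p K" "0 < p" "\<And>n. f n \<in> Lp M p" "\<And>n. Lp_norm M p (f n) \<le> B"
  obtains r where "strict_mono r"
    "(\<lambda>n. Lp_norm_powr M p (K (\<lambda>x. f (r n) x - f (r (Suc n)) x))) \<longlonglongrightarrow> 0"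
proof -
  have K: "Lp_operator M p K"
    using assms(1) by (simp add: compact_Lp_op_def)
  have Kf: "K (f n) \<in> Lp M p" for n
    using K assms(3) by (simp add: Lp_operator_def)
  obtain r g where r: "strict_mono r" and g: "g \<in> Lp M p"
    and lim: "(\<lambda>n. Lp_norm M p (\<lambda>x. K (f (r n)) x - g x)) \<longlonglongrightarrow> 0"
    using assms(1)[unfolded compact_Lp_op_def, THEN conjunct2, rule_format, of f] assms(3,4)
    by blast
  define e where "e n = Lp_norm_powr M p (\<lambda>x. K (f (r n)) x - g x)" for n
  have e: "e \<longlonglongrightarrow> 0"
    unfolding e_def Lp_norm_powr_eq[OF assms(2)]
    by (rule tendsto_zero_powrI[OF lim tendsto_const]) (use assms(2) in \<open>auto simp: Lp_norm_nonneg\<close>)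
  have diff_Lp: "(\<lambda>x. K (f (r n)) x - g x) \<in> Lp M p" for n
    using Kf g assms(2) by (rule Lp_diff)
  have bound:
    "Lp_norm_powr M p (K (\<lambda>x. f (r n) x - f (r (Suc n)) x)) \<le> 2 powr p * (e n + e (Suc n))" for n
  proof -
    have "AE x in M. K (\<lambda>y. (-1) * f (r (Suc n)) y + f (r n) y) x
        = (-1) * K (f (r (Suc n))) x + K (f (r n)) x"
      using K assms(3) unfolding Lp_operator_def by blast
    moreover have "(\<lambda>y. (-1) * f (r (Suc n)) y + f (r n) y) = (\<lambda>x. f (r n) x - f (r (Suc n)) x)"
      by auto
    ultimately have "AE x in M. K (\<lambda>x. f (r n) x - f (r (Suc n)) x) x
        = (K (f (r n)) x - g x) - (K (f (r (Suc n))) x - g x)"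
      by (simp add: eventually_mono)
    then have "AE x in M. norm (K (\<lambda>x. f (r n) x - f (r (Suc n)) x) x)
        \<le> norm (K (f (r n)) x - g x) + norm (K (f (r (Suc n))) x - g x)"
      by (rule eventually_mono) (metis norm_triangle_ineq4)
    moreover have "K (\<lambda>x. f (r n) x - f (r (Suc n)) x) \<in> borel_measurable M"
      using K Lp_diff[OF assms(3,3,2)] by (auto simp: Lp_operator_def Lp_def)
    ultimately show ?thesis
      using Lp_dominated_by_sum(2)[OF diff_Lp diff_Lp _ assms(2)] by (simp add: e_def)
  qed
  have "(\<lambda>n. 2 powr p * (e n + e (Suc n))) \<longlonglongrightarrow> 2 powr p * (0 + 0)"
    by (intro tendsto_intros e LIMSEQ_Suc)
  then have "(\<lambda>n. 2 powr p * (e n + e (Suc n))) \<longlonglongrightarrow> 0"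
    by simp
  then have "(\<lambda>n. Lp_norm_powr M p (K (\<lambda>x. f (r n) x - f (r (Suc n)) x))) \<longlonglongrightarrow> 0"
    by (rule tendsto_sandwich[rotated 2, OF tendsto_const])
      (simp_all add: Lp_norm_powr_nonneg bound)
  then show ?thesis
    by (rule that[OF r])
qed

section \<open>Norm of a multiplication operator plus a compact operator\<close>

lemma disjoint_family_in_norm_gt:
  assumes "sigma_finite_measure M" "diffuse M" "u \<in> Linf M" "0 \<le> c" "c < Linf_norm M u"
  obtains P :: "nat \<Rightarrow> 'a set" where "\<And>n. P n \<in> sets M"
    "\<And>n. P n \<subseteq> {x\<in>space M. c < norm (u x)}" "\<And>n. 0 < emeasure M (P n)"
    "\<And>n. emeasure M (P n) < \<infinity>" "disjoint_family P"
proof -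
  have "u \<in> borel_measurable M"
    using assms(3) by (simp add: Linf_def)
  then have "{x\<in>space M. c < norm (u x)} \<in> sets M"
    by measurable
  from sigma_finite_measure.obtain_finite_positive_subset[OF assms(1) this
      emeasure_norm_gt_pos[OF assms(3-5)]]
  obtain B where B: "B \<in> sets M" "B \<subseteq> {x\<in>space M. c < norm (u x)}"
    "0 < emeasure M B" "emeasure M B < \<infinity>" .
  obtain P :: "nat \<Rightarrow> 'a set" where P: "\<And>n. P n \<in> sets M" "\<And>n. P n \<subseteq> B"
    "\<And>n. 0 < emeasure M (P n)" "\<And>n. emeasure M (P n) < \<infinity>" "disjoint_family P"
    using diffuse_obtain_disjoint_family[OF assms(2) B(1,3,4)] by blast
  show ?thesis
    by (rule that[OF P(1) _ P(3-5)]) (use P(2) B(2) in blast)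
qed

lemma unit_sequence_for_mult_op_plus_compact:
  fixes u :: "'a \<Rightarrow> 'b::{real_normed_field,second_countable_topology}"
  assumes "sigma_finite_measure M" "diffuse M" "0 < p" "u \<in> Linf M" "compact_Lp_op M p K"
    and "0 \<le> c" "c < Linf_norm M u"
  obtains h :: "nat \<Rightarrow> 'a \<Rightarrow> 'b" where "\<And>n. h n \<in> Lp M p" "\<And>n. Lp_norm M p (h n) \<le> 1"
    "\<And>n. c powr p \<le> Lp_norm_powr M p (mult_op u (h n))"
    "(\<lambda>n. Lp_norm_powr M p (K (h n))) \<longlonglongrightarrow> 0"
proof -
  obtain P :: "nat \<Rightarrow> 'a set" where P: "\<And>n. P n \<in> sets M"
    "\<And>n. P n \<subseteq> {x\<in>space M. c < norm (u x)}" "\<And>n. 0 < emeasure M (P n)"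
    "\<And>n. emeasure M (P n) < \<infinity>" "disjoint_family P"
    using disjoint_family_in_norm_gt[OF assms(1,2,4,6,7)] by blast
  define f :: "nat \<Rightarrow> 'a \<Rightarrow> 'b" where "f n = Lp_bump M p (P n)" for n
  have f_Lp: "f n \<in> Lp M p" for n
    unfolding f_def by (rule Lp_bump_in_Lp[OF P(1,4) assms(3)])
  have f_norm: "Lp_norm_powr M p (f n) = 1 / 2" for n
    unfolding f_def by (rule Lp_norm_powr_Lp_bump[OF P(1,3,4) assms(3)])
  have f_ball: "Lp_norm M p (f n) \<le> 1" for n
    using f_norm[of n] by (subst Lp_norm_le_iff[OF assms(3)]) auto
  obtain r where r: "strict_mono r"
    and lim: "(\<lambda>n. Lp_norm_powr M p (K (\<lambda>x. f (r n) x - f (r (Suc n)) x))) \<longlonglongrightarrow> 0"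
    using compact_Lp_op_diff_tendsto_zero[OF assms(5,3) f_Lp f_ball] .
  define h where "h n = (\<lambda>x. f (r n) x - f (r (Suc n)) x)" for n
  have "P (r n) \<inter> P (r (Suc n)) = {}" for n
    using P(5) strict_monoD[OF r, of n "Suc n"] by (auto simp: disjoint_family_on_def)
  then have "f (r n) x = 0 \<or> f (r (Suc n)) x = 0" for n x
    by (auto simp: f_def Lp_bump_def)
  then have h_Lp: "h n \<in> Lp M p" and h_norm: "Lp_norm_powr M p (h n) = 1" for n
    using Lp_norm_powr_diff_disjoint[OF f_Lp f_Lp] f_norm by (simp_all add: h_def)
  have h_ball: "Lp_norm M p (h n) \<le> 1" for n
    using h_norm[of n] by (subst Lp_norm_le_iff[OF assms(3)]) auto
  have uh: "c powr p \<le> Lp_norm_powr M p (mult_op u (h n))" for n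
  proof -
    have "c \<le> norm (u x)" if "h n x \<noteq> 0" for x
    proof -
      have "x \<in> P (r n) \<union> P (r (Suc n))"
        using that by (auto simp: h_def f_def Lp_bump_def split: if_splits)
      then show ?thesis
        using P(2) by force
    qed
    from Lp_norm_powr_mult_op_ge[OF h_Lp mult_op_in_Lp(1)[OF assms(4) h_Lp assms(3)] assms(6,3) this]
    show ?thesis
      using h_norm by simp
  qed
  show ?thesis
    using lim unfolding h_def[symmetric] by (rule that[OF h_Lp h_ball uh])
qed

lemma op_norm_mult_op_plus_compact_ge:
  fixes u :: "'a \<Rightarrow> 'b::{real_normed_field,second_countable_topology}"
  assumes "sigma_finite_measure M" "diffuse M" "0 < p" "u \<in> Linf M" "compact_Lp_op M p K"
    and "0 \<le> c" "c < Linf_norm M u" "0 < d" "d < 1"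
  shows "(1 - d) * c \<le> op_norm M p (\<lambda>f x. mult_op u f x + K f x)"
proof -
  define N where "N = op_norm M p (\<lambda>f x. mult_op u f x + K f x)"
  have K: "Lp_operator M p K"
    using assms(5) by (simp add: compact_Lp_op_def)
  have bdd: "bdd_above ((\<lambda>f. Lp_norm M p (\<lambda>x. mult_op u f x + K f x)) `
      {f\<in>Lp M p. Lp_norm M p f \<le> 1})"
    using bdd_above_mult_op_plus[OF assms(4) K assms(3)] .
  have N: "0 \<le> N"
    unfolding N_def by (rule op_norm_nonneg[OF bdd])
  obtain h where h_Lp: "\<And>n. h n \<in> Lp M p" and h_ball: "\<And>n. Lp_norm M p (h n) \<le> 1"
    and uh: "\<And>n. c powr p \<le> Lp_norm_powr M p (mult_op u (h n))"
    and lim: "(\<lambda>n. Lp_norm_powr M p (K (h n))) \<longlonglongrightarrow> 0"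
    using unit_sequence_for_mult_op_plus_compact[OF assms(1-7)] by blast
  have "c powr p \<le> (1 - d) powr (-p) * N powr p + d powr (-p) * Lp_norm_powr M p (K (h n))" for n
  proof -
    have Kh: "K (h n) \<in> Lp M p"
      using K h_Lp by (simp add: Lp_operator_def)
    have "Lp_norm M p (\<lambda>x. mult_op u (h n) x + K (h n) x) \<le> N"
      unfolding N_def using Lp_norm_le_op_norm[OF bdd h_Lp h_ball] by simp
    then have T_le: "Lp_norm_powr M p (\<lambda>x. mult_op u (h n) x + K (h n) x) \<le> N powr p"
      using Lp_norm_le_iff[OF assms(3) N] by blast
    note uh_Lp = mult_op_in_Lp(1)[OF assms(4) h_Lp[of n] assms(3)]
    have "c powr p \<le> (1 - d) powr (-p) * Lp_norm_powr M p (\<lambda>x. mult_op u (h n) x + K (h n) x)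
        + d powr (-p) * Lp_norm_powr M p (K (h n))"
      using uh[of n] Lp_norm_powr_le_weighted[OF Lp_add[OF uh_Lp Kh assms(3)] Kh assms(3,8,9)]
      by linarith
    also have "\<dots> \<le> (1 - d) powr (-p) * N powr p + d powr (-p) * Lp_norm_powr M p (K (h n))"
      using T_le by (intro add_right_mono mult_left_mono) auto
    finally show ?thesis .
  qed
  moreover have "(\<lambda>n. (1 - d) powr (-p) * N powr p + d powr (-p) * Lp_norm_powr M p (K (h n)))
      \<longlonglongrightarrow> (1 - d) powr (-p) * N powr p + d powr (-p) * 0"
    using lim by (intro tendsto_intros)
  ultimately have "c powr p \<le> (1 - d) powr (-p) * N powr p"
    by (intro LIMSEQ_le_const) auto
  then have "(1 - d) powr p * c powr p \<le> N powr p"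
    using assms(8,9) by (simp add: powr_minus field_simps)
  then have "((1 - d) * c) powr p \<le> N powr p"
    using assms(6,9) by (simp add: powr_mult)
  then show ?thesis
    using powr_less_mono2[OF assms(3) N, of "(1 - d) * c"] by (force simp: N_def)
qed

lemma Linf_norm_le_op_norm_mult_op_plus_compact:
  fixes u :: "'a \<Rightarrow> 'b::{real_normed_field,second_countable_topology}"
  assumes "sigma_finite_measure M" "diffuse M" "0 < p" "u \<in> Linf M" "compact_Lp_op M p K"
  shows "Linf_norm M u \<le> op_norm M p (\<lambda>f x. mult_op u f x + K f x)"
proof (rule field_le_mult_one_interval)
  fix z :: real
  assume z: "0 < z" "z < 1"
  show "z * Linf_norm M u \<le> op_norm M p (\<lambda>f x. mult_op u f x + K f x)"
  proof (cases "Linf_norm M u = 0")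
    case True
    have "Lp_operator M p K"
      using assms(5) by (simp add: compact_Lp_op_def)
    with True show ?thesis
      using op_norm_nonneg[OF bdd_above_mult_op_plus[OF assms(4) _ assms(3)]] by simp
  next
    case False
    then have "0 < Linf_norm M u"
      using Linf_norm_nonneg[OF assms(4)] by simp
    moreover have "0 < sqrt z" "sqrt z < 1" "sqrt z * sqrt z = z"
      using z by simp_all
    ultimately have "(1 - (1 - sqrt z)) * (sqrt z * Linf_norm M u)
        \<le> op_norm M p (\<lambda>f x. mult_op u f x + K f x)"
      by (intro op_norm_mult_op_plus_compact_ge[OF assms]) auto
    then show ?thesis
      using \<open>sqrt z * sqrt z = z\<close> by (simp add: mult.assoc[symmetric])
  qed
qed

lemma op_norm_mult_op_le_Linf_norm:
  fixes u :: "'a \<Rightarrow> 'b::{real_normed_field,second_countable_topology}"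
  assumes "u \<in> Linf M" "0 < p"
  shows "op_norm M p (mult_op u) \<le> Linf_norm M u"
  unfolding op_norm_def
proof (rule cSup_least)
  have "(\<lambda>x. 0 :: 'b) \<in> {f \<in> Lp M p. Lp_norm M p f \<le> 1}"
    by (simp add: zero_in_Lp Lp_norm_zero)
  then show "(\<lambda>f. Lp_norm M p (mult_op u f)) ` {f \<in> Lp M p. Lp_norm M p f \<le> 1} \<noteq> {}"
    by blast
next
  fix y
  assume "y \<in> (\<lambda>f. Lp_norm M p (mult_op u f)) ` {f \<in> Lp M p. Lp_norm M p f \<le> 1}"
  then obtain f :: "'a \<Rightarrow> 'b" where f: "f \<in> Lp M p" "Lp_norm M p f \<le> 1"
    and y: "y = Lp_norm M p (mult_op u f)"
    by auto
  have "Lp_norm_powr M p f \<le> 1"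
    using f(2) by (subst (asm) Lp_norm_le_iff[OF assms(2)]) auto
  then have "Linf_norm M u powr p * Lp_norm_powr M p f \<le> Linf_norm M u powr p"
    by (simp add: mult_left_le)
  then have "Lp_norm_powr M p (mult_op u f) \<le> Linf_norm M u powr p"
    using mult_op_in_Lp(2)[OF assms(1) f(1) assms(2)] by simp
  then show "y \<le> Linf_norm M u"
    unfolding y using Lp_norm_le_iff[OF assms(2) Linf_norm_nonneg[OF assms(1)]] by blast
qed

lemma compact_Lp_op_zero:
  "compact_Lp_op M p (\<lambda>f x. 0 :: 'b::{real_normed_field,second_countable_topology})"
proof -
  have "Lp_operator M p (\<lambda>f x. 0 :: 'b)"
    unfolding Lp_operator_def by (auto simp: zero_in_Lp Lp_norm_zero intro: exI[of _ 0])
  moreover have "(\<lambda>n::nat. Lp_norm M p (\<lambda>x. (0 :: 'b) - 0)) \<longlonglongrightarrow> 0"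
    by (simp add: Lp_norm_zero)
  ultimately show ?thesis
    unfolding compact_Lp_op_def using strict_mono_id zero_in_Lp by blast
qed

theorem theorem3p2:
  fixes M :: "'a measure" and p :: real and u :: "'a \<Rightarrow> 'b::{real_normed_field,second_countable_topology}"
  assumes "sigma_finite_measure M" and "diffuse M"
    and "1 \<le> p"
    and "u \<in> Linf M"
  shows "(\<forall>K. compact_Lp_op M p K \<longrightarrow>
            op_norm M p (\<lambda>f x. mult_op u f x + K f x) \<ge> op_norm M p (mult_op u))
       \<and> op_norm M p (mult_op u) = Linf_norm M u
       \<and> ess_norm_mult M p u = Linf_norm M u"
proof -
  have p: "0 < p"
    using assms(3) by simp
  note lower = Linf_norm_le_op_norm_mult_op_plus_compact[OF assms(1,2) p assms(4)]
  have norm_eq: "op_norm M p (mult_op u) = Linf_norm M u"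
    using lower[OF compact_Lp_op_zero] op_norm_mult_op_le_Linf_norm[OF assms(4) p] by simp
  have "ess_norm_mult M p u = Linf_norm M u"
    unfolding ess_norm_mult_def
  proof (rule cInf_eq_minimum)
    show "Linf_norm M u \<in> (\<lambda>K. op_norm M p (\<lambda>f x. mult_op u f x + K f x)) ` {K. compact_Lp_op M p K}"
      using compact_Lp_op_zero norm_eq by (intro image_eqI[where x="\<lambda>f x. 0"]) auto
  qed (use lower in auto)
  with lower norm_eq show ?thesis
    by auto
qed

end
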